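(* Let $n\ge2$ be even, $r\ge1$, $V=\{1,\dots,n\}$, $R=\{n+1,\dots,n+r\}$, and let $G^R$ be a graph on $V\cup R$ with $G$ its induced subgraph on $V$. Let $M_0$ be a perfect matching of $G$ and let $F$ be an RC-rooted spanning forest of $G^R$ compatible with $M_0$, with cycles $C_1,\dots,C_{k}$ ($k\ge0$). For $(\varepsilon_1,\dots,\varepsilon_k)\in\{0,1\}^k$, let $M^{(\varepsilon_1,\dots,\varepsilon_k)}$ be the edge set consisting of: the edges of $M_0$ lying on branches of $F$ (i.e. not on cycles); for each $j$ with $\varepsilon_j=0$, the edges of $M_0$ on $C_j$; for each $j$ with $\varepsilon_j=1$, the edges of $F\setminus M_0$ on $C_j$ (and $M^{()}=M_0$ if $k=0$). Then for every $(\varepsilon_1,\dots,\varepsilon_k)\in\{0,1\}^k$, $M^{(\varepsilon_1,\dots,\varepsilon_k)}$ is a perfect matching of $G$.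
   Context: An RC-rooted spanning forest (RCRSF) of $G^R$ is a set of oriented edges of $G^R$ spanning the vertices of $V$ such that each connected component is either a tree rooted at a vertex of $R$, or a tree rooted on a cycle of $G$ (a unicycle); edges of components are oriented towards the root, and cycles are oriented in one of the two directions. An RCRSF $F$ is compatible with $M_0$ if it consists of the $n/2$ edges of $M_0$ together with $n/2$ edges of $G^R$ not in $M_0$, and moreover every cycle of its unicycles has even length $\ge4$ and alternates between edges of $M_0$ and edges of $F\setminus M_0$. *)

theory Defs
  imports Main
begin

text \<open>An oriented edge is a pair (u,v),
meaning u is oriented towards v; its underlying undirected edge is {u,v}.\<close>

definition und :: "nat \<times> nat \<Rightarrow> nat set" where
  "und e = {fst e, snd e}"

definition is_graph :: "nat set \<Rightarrow> nat set set \<Rightarrow> bool" where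
  "is_graph W E \<longleftrightarrow> (\<forall>e\<in>E. card e = 2 \<and> e \<subseteq> W)"

definition perfect_matching :: "nat set set \<Rightarrow> nat set \<Rightarrow> nat set set \<Rightarrow> bool" where
  "perfect_matching E V M \<longleftrightarrow>
     M \<subseteq> {e \<in> E. e \<subseteq> V} \<and> (\<forall>v\<in>V. \<exists>!e. e \<in> M \<and> v \<in> e)"

text \<open>RC-rooted spanning forest of the graph E on V \<union> R, as a set of oriented
edges: every vertex has at most one outgoing edge (edges oriented towards
the root); vertices of V are never roots (trees are rooted in R, and every
vertex of a unicycle has an outgoing edge); the directed cycles lie in V
(they are cycles of the induced graph G) and are genuine cycles of the
simple graph, i.e. have length at least 3 (no loops since edges have two
endpoints, and no 2-cycles).\<close>
definition rcrsf :: "nat set set \<Rightarrow> nat set \<Rightarrow> nat set \<Rightarrow> (nat \<times> nat) set \<Rightarrow> bool" where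
  "rcrsf E V R F \<longleftrightarrow>
     (\<forall>e\<in>F. und e \<in> E) \<and>
     (\<forall>u v w. (u,v) \<in> F \<and> (u,w) \<in> F \<longrightarrow> v = w) \<and>
     (\<forall>u\<in>V. \<exists>v. (u,v) \<in> F) \<and>
     (\<forall>u. (u,u) \<in> F\<^sup>+ \<longrightarrow> u \<in> V) \<and>
     (\<forall>u v. (u,v) \<in> F \<longrightarrow> (v,u) \<notin> F)"

text \<open>The cycles of F, each given as its set of oriented edges: the cycle
through a cycle vertex u consists of the edges of F whose tail is reachable
from u.\<close>
definition cycles :: "(nat \<times> nat) set \<Rightarrow> (nat \<times> nat) set set" where
  "cycles F = {{(a,b) \<in> F. (u,a) \<in> F\<^sup>+} | u. (u,u) \<in> F\<^sup>+}"

definition compatible :: "nat \<Rightarrow> nat set set \<Rightarrow> (nat \<times> nat) set \<Rightarrow> bool" where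
  "compatible n M0 F \<longleftrightarrow>
     inj_on und F \<and> M0 \<subseteq> und ` F \<and> card (und ` F - M0) = n div 2 \<and>
     (\<forall>C\<in>cycles F. even (card C) \<and> card C \<ge> 4 \<and>
        (\<forall>a b c. (a,b) \<in> C \<and> (b,c) \<in> C \<longrightarrow> (und (a,b) \<in> M0 \<longleftrightarrow> und (b,c) \<notin> M0)))"

text \<open>The edge set M^(eps): eps C = True means epsilon = 1 on cycle C.\<close>
definition M_eps :: "nat set set \<Rightarrow> (nat \<times> nat) set \<Rightarrow> ((nat \<times> nat) set \<Rightarrow> bool) \<Rightarrow> nat set set" where
  "M_eps M0 F eps =
     {e \<in> M0. e \<notin> und ` (\<Union>(cycles F))} \<union>
     (\<Union>C\<in>{C \<in> cycles F. \<not> eps C}. und ` C \<inter> M0) \<union>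
     (\<Union>C\<in>{C \<in> cycles F. eps C}. und ` C - M0)"

end

theory Submission
  imports Defs
begin

text \<open>Every vertex of F has at most one outgoing edge, so the cycles of F are
vertex-disjoint and a vertex x on a cycle meets exactly two of its edges: the one
leaving x and the one entering x from its unique predecessor on the cycle.
Compatibility puts exactly one of these two edges in M0. Hence \<open>M_eps M0 F eps\<close>
arises from M0 by exchanging, on some vertex-disjoint M0-alternating cycles, the
M0-edges for the remaining ones, and such an exchange preserves perfect matchings.\<close>

definition cycle_of :: "('a \<times> 'a) set \<Rightarrow> 'a \<Rightarrow> ('a \<times> 'a) set" where
  "cycle_of F u = {(a, b) \<in> F. (u, a) \<in> F\<^sup>+}"

lemma cycles_eq_cycle_of: "cycles F = {cycle_of F u | u. (u, u) \<in> F\<^sup>+}"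
  by (simp add: cycles_def cycle_of_def)

lemma single_valued_cycle_returns:
  assumes sv: "single_valued F" and "(u, u) \<in> F\<^sup>+" and "(u, v) \<in> F\<^sup>+"
  shows "(v, u) \<in> F\<^sup>*"
  using \<open>(u, v) \<in> F\<^sup>+\<close>
proof (induction v rule: trancl_induct)
  case (base v)
  from \<open>(u, u) \<in> F\<^sup>+\<close> obtain w where "(u, w) \<in> F" "(w, u) \<in> F\<^sup>*"
    by (meson tranclD)
  with sv base show ?case
    by (metis single_valuedD)
next
  case (step v w)
  have "(v, v) \<in> F\<^sup>+"
    using step.IH step.hyps(1) by (meson rtrancl_trancl_trancl)
  then obtain w' where "(v, w') \<in> F" "(w', v) \<in> F\<^sup>*"
    by (meson tranclD)
  with sv step.hyps(2) have "(w, v) \<in> F\<^sup>*"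
    by (metis single_valuedD)
  with step.IH show ?case
    by (meson rtrancl_trans)
qed

lemma single_valued_cycle_of_eq:
  assumes sv: "single_valued F" and uu: "(u, u) \<in> F\<^sup>+" and ux: "(u, x) \<in> F\<^sup>+"
  shows "(x, x) \<in> F\<^sup>+" and "cycle_of F x = cycle_of F u"
proof -
  have xu: "(x, u) \<in> F\<^sup>*"
    using single_valued_cycle_returns[OF sv uu ux] .
  then show "(x, x) \<in> F\<^sup>+"
    using ux by (meson rtrancl_trancl_trancl)
  show "cycle_of F x = cycle_of F u"
    unfolding cycle_of_def using uu ux xu
    by (auto intro: trancl_trans rtrancl_trancl_trancl)
qed

lemma rtrancl_avoiding_start:
  assumes "(v, x) \<in> F\<^sup>*"
  shows "(v, x) \<in> {(a, b) \<in> F. b \<noteq> v}\<^sup>*"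
  using assms
proof (induction x rule: rtrancl_induct)
  case (step y z)
  then show ?case
    by (cases "z = v") (auto intro: rtrancl_into_rtrancl)
qed simp

lemma single_valued_cycle_pred_unique:
  assumes sv: "single_valued F" and "(a, x) \<in> F" "(p, x) \<in> F"
    and "(x, a) \<in> F\<^sup>*" "(x, p) \<in> F\<^sup>*"
  shows "a = p"
proof -
  \<comment> \<open>Along paths from x that never re-enter x, the vertices a and p are dead ends.\<close>
  let ?F' = "{(a, b) \<in> F. b \<noteq> x}"
  have "single_valued ?F'"
    using sv by (rule single_valued_subset[rotated]) blast
  moreover have "(x, a) \<in> ?F'\<^sup>*" "(x, p) \<in> ?F'\<^sup>*"
    using assms(4,5) by (auto intro: rtrancl_avoiding_start)
  ultimately have "(a, p) \<in> ?F'\<^sup>* \<or> (p, a) \<in> ?F'\<^sup>*"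
    by (rule single_valued_confluent)
  moreover have "(a, w) \<notin> ?F'" "(p, w) \<notin> ?F'" for w
    using sv assms(2,3) by (auto dest: single_valuedD)
  ultimately show ?thesis
    by (auto elim: converse_rtranclE)
qed

lemma cycle_of_vertex_in_cycles:
  assumes sv: "single_valued F" and C: "C \<in> cycles F" and x: "x \<in> \<Union>(und ` C)"
  shows "(x, x) \<in> F\<^sup>+" and "C = cycle_of F x"
proof -
  obtain u where uu: "(u, u) \<in> F\<^sup>+" and C_eq: "C = cycle_of F u"
    using C by (auto simp: cycles_eq_cycle_of)
  from x obtain a b where ab: "(a, b) \<in> C" "x \<in> {a, b}"
    by (auto simp: und_def)
  then have "(u, a) \<in> F\<^sup>+" "(a, b) \<in> F"
    unfolding C_eq cycle_of_def by auto
  with ab(2) have "(u, x) \<in> F\<^sup>+"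
    by auto
  with single_valued_cycle_of_eq[OF sv uu] C_eq show "(x, x) \<in> F\<^sup>+" "C = cycle_of F x"
    by simp_all
qed

lemma cycle_of_edges_at:
  assumes sv: "single_valued F" and "(x, s) \<in> F" "(p, x) \<in> F" "(x, p) \<in> F\<^sup>*"
    and ab: "(a, b) \<in> cycle_of F x" and "x \<in> {a, b}"
  shows "(a, b) = (p, x) \<or> (a, b) = (x, s)"
proof (cases "a = x")
  case True
  with ab have "(x, b) \<in> F"
    by (simp add: cycle_of_def)
  with True sv \<open>(x, s) \<in> F\<close> show ?thesis
    by (auto dest: single_valuedD)
next
  case False
  with \<open>x \<in> {a, b}\<close> have "b = x"
    by simp
  with ab have "(a, x) \<in> F" "(x, a) \<in> F\<^sup>*"
    by (auto simp: cycle_of_def)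
  with single_valued_cycle_pred_unique[OF sv _ \<open>(p, x) \<in> F\<close> _ \<open>(x, p) \<in> F\<^sup>*\<close>] \<open>b = x\<close>
  show ?thesis
    by simp
qed

lemma alternating_cycle_at_vertex:
  assumes sv: "single_valued F" and C: "C \<in> cycles F" and x: "x \<in> \<Union>(und ` C)"
    and alt: "\<forall>a b c. (a, b) \<in> C \<and> (b, c) \<in> C \<longrightarrow> (und (a, b) \<in> M \<longleftrightarrow> und (b, c) \<notin> M)"
  shows "(\<exists>e \<in> und ` C \<inter> M. x \<in> e) \<and> (\<exists>!e. e \<in> und ` C - M \<and> x \<in> e)"
proof -
  have xx: "(x, x) \<in> F\<^sup>+" and C_eq: "C = cycle_of F x"
    using cycle_of_vertex_in_cycles[OF sv C x] by simp_all
  obtain s where xs: "(x, s) \<in> F"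
    using xx by (meson tranclD)
  obtain p where xp: "(x, p) \<in> F\<^sup>*" and px: "(p, x) \<in> F"
    using xx by (meson tranclD2)
  have "(x, p) \<in> F\<^sup>+"
    using xp xx by (metis rtranclD)
  then have in_C: "(p, x) \<in> C" "(x, s) \<in> C"
    using px xs xx unfolding C_eq cycle_of_def by auto
  then have alternates: "und (p, x) \<in> M \<longleftrightarrow> und (x, s) \<notin> M"
    using alt by blast
  have at_x: "e = und (p, x) \<or> e = und (x, s)" if "e \<in> und ` C" "x \<in> e" for e
    using that cycle_of_edges_at[OF sv xs px xp] unfolding C_eq by (force simp: und_def)
  have two_edges: ?thesis
    if "e\<^sub>1 \<in> und ` C" "e\<^sub>1 \<in> M" "x \<in> e\<^sub>1" and "e\<^sub>2 \<in> und ` C" "e\<^sub>2 \<notin> M" "x \<in> e\<^sub>2"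
      and at_x: "\<And>e. e \<in> und ` C \<Longrightarrow> x \<in> e \<Longrightarrow> e = e\<^sub>1 \<or> e = e\<^sub>2" for e\<^sub>1 e\<^sub>2
  proof
    show "\<exists>e \<in> und ` C \<inter> M. x \<in> e"
      using that(1-3) by blast
    show "\<exists>!e. e \<in> und ` C - M \<and> x \<in> e"
    proof (rule ex1I[of _ e\<^sub>2])
      show "e\<^sub>2 \<in> und ` C - M \<and> x \<in> e\<^sub>2"
        using that(4-6) by blast
      show "e = e\<^sub>2" if "e \<in> und ` C - M \<and> x \<in> e" for e
        using that at_x[of e] \<open>e\<^sub>1 \<in> M\<close> by blast
    qed
  qed
  have in_und_C: "und (p, x) \<in> und ` C" "und (x, s) \<in> und ` C"
    using in_C by simp_all
  have x_in: "x \<in> und (p, x)" "x \<in> und (x, s)"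
    by (simp_all add: und_def)
  show ?thesis
  proof (cases "und (p, x) \<in> M")
    case True
    with alternates have "und (x, s) \<notin> M"
      by blast
    from two_edges[OF in_und_C(1) True x_in(1) in_und_C(2) this x_in(2) at_x] show ?thesis .
  next
    case False
    with alternates have "und (x, s) \<in> M"
      by blast
    moreover have "e = und (x, s) \<or> e = und (p, x)" if "e \<in> und ` C" "x \<in> e" for e
      using at_x[OF that] by blast
    ultimately show ?thesis
      by (rule two_edges[OF in_und_C(2) _ x_in(2) in_und_C(1) False x_in(1)])
  qed
qed

definition switch_cycles ::
  "'a set set \<Rightarrow> 'i set \<Rightarrow> ('i \<Rightarrow> 'a set set) \<Rightarrow> ('i \<Rightarrow> bool) \<Rightarrow> 'a set set" where
  "switch_cycles M I D S =
     {e \<in> M. e \<notin> (\<Union>i\<in>I. D i)} \<union> (\<Union>i\<in>{i \<in> I. \<not> S i}. D i \<inter> M) \<union> (\<Union>i\<in>{i \<in> I. S i}. D i - M)"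

lemma switch_cycles_subset:
  "(\<And>i. i \<in> I \<Longrightarrow> D i \<subseteq> A) \<Longrightarrow> M \<subseteq> A \<Longrightarrow> switch_cycles M I D S \<subseteq> A"
  unfolding switch_cycles_def by blast

lemma switch_cycles_memE:
  assumes "e \<in> switch_cycles M I D S"
  obtains (unchanged) "e \<in> M" "e \<notin> (\<Union>i\<in>I. D i)"
  | (on_cycle) i where "i \<in> I" "e \<in> D i" "e \<in> M \<longleftrightarrow> \<not> S i"
  using assms unfolding switch_cycles_def by blast

lemma perfect_matching_switch_cycles:
  assumes M: "perfect_matching E V M"
    and sub: "\<And>i. i \<in> I \<Longrightarrow> D i \<subseteq> {e \<in> E. e \<subseteq> V}"
    and disj: "\<And>i j x. i \<in> I \<Longrightarrow> j \<in> I \<Longrightarrow> x \<in> \<Union>(D i) \<Longrightarrow> x \<in> \<Union>(D j) \<Longrightarrow> i = j"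
    and alt: "\<And>i x. i \<in> I \<Longrightarrow> x \<in> \<Union>(D i) \<Longrightarrow>
                (\<exists>e \<in> D i \<inter> M. x \<in> e) \<and> (\<exists>!e. e \<in> D i - M \<and> x \<in> e)"
  shows "perfect_matching E V (switch_cycles M I D S)"
proof -
  let ?M' = "switch_cycles M I D S"
  have M_sub: "M \<subseteq> {e \<in> E. e \<subseteq> V}" and M_unique: "\<forall>x \<in> V. \<exists>!e. e \<in> M \<and> x \<in> e"
    using M unfolding perfect_matching_def by blast+
  have "?M' \<subseteq> {e \<in> E. e \<subseteq> V}"
    using sub M_sub by (rule switch_cycles_subset)
  moreover have "\<exists>!e. e \<in> ?M' \<and> x \<in> e" if "x \<in> V" for x
  proof -
    obtain m where m: "m \<in> M" "x \<in> m" and m_unique: "\<And>e. e \<in> M \<Longrightarrow> x \<in> e \<Longrightarrow> e = m"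
      using M_unique \<open>x \<in> V\<close> by blast
    show ?thesis
    proof (cases "\<exists>i \<in> I. x \<in> \<Union>(D i)")
      case False
      with m have "m \<in> ?M'"
        unfolding switch_cycles_def by blast
      moreover have "e = m" if "e \<in> ?M'" "x \<in> e" for e
        using that(1)
      proof (cases rule: switch_cycles_memE)
        case unchanged
        then show ?thesis using m_unique \<open>x \<in> e\<close> by blast
      next
        case (on_cycle i)
        then show ?thesis using False \<open>x \<in> e\<close> by blast
      qed
      ultimately show ?thesis
        using m(2) by blast
    next
      case True
      then obtain i where i: "i \<in> I" "x \<in> \<Union>(D i)"
        by blast
      have "m \<in> D i"
        using alt[OF i] m_unique by blast
      have in_D_i: "e \<in> D i \<and> (e \<in> M \<longleftrightarrow> \<not> S i)" if "e \<in> ?M'" "x \<in> e" for e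
        using that(1)
      proof (cases rule: switch_cycles_memE)
        case unchanged
        then show ?thesis using m_unique \<open>x \<in> e\<close> \<open>m \<in> D i\<close> i(1) by blast
      next
        case (on_cycle j)
        with disj[OF i(1) on_cycle(1) i(2)] \<open>x \<in> e\<close> show ?thesis
          by blast
      qed
      show ?thesis
      proof (cases "S i")
        case False
        with i(1) m(1) \<open>m \<in> D i\<close> have "m \<in> ?M'"
          unfolding switch_cycles_def by blast
        with m(2) in_D_i m_unique False show ?thesis
          by blast
      next
        case True
        obtain f where f: "f \<in> D i - M" "x \<in> f" and f_unique: "\<And>e. e \<in> D i - M \<Longrightarrow> x \<in> e \<Longrightarrow> e = f"
          using alt[OF i] by blast
        with i(1) True have "f \<in> ?M'"
          unfolding switch_cycles_def by blast
        with f(2) f_unique in_D_i True show ?thesis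
          by blast
      qed
    qed
  qed
  ultimately show ?thesis
    unfolding perfect_matching_def by blast
qed

lemma rcrsf_single_valued: "rcrsf E V R F \<Longrightarrow> single_valued F"
  unfolding rcrsf_def single_valued_def by blast

lemma rcrsf_cycle_edges:
  assumes F: "rcrsf E V R F" and C: "C \<in> cycles F"
  shows "und ` C \<subseteq> {e \<in> E. e \<subseteq> V}"
proof -
  have sv: "single_valued F"
    using F by (rule rcrsf_single_valued)
  have "C \<subseteq> F"
    using C by (auto simp: cycles_eq_cycle_of cycle_of_def)
  then have "und ` C \<subseteq> E"
    using F by (auto simp: rcrsf_def)
  moreover have "x \<in> V" if "x \<in> \<Union>(und ` C)" for x
    using cycle_of_vertex_in_cycles(1)[OF sv C that] F by (simp add: rcrsf_def)
  ultimately show ?thesis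
    by blast
qed

lemma M_eps_eq_switch_cycles: "M_eps M0 F eps = switch_cycles M0 (cycles F) ((`) und) eps"
  by (simp add: M_eps_def switch_cycles_def image_Union)

theorem lemma6:
  fixes n r :: nat and GR M0 :: "nat set set" and F :: "(nat \<times> nat) set"
    and eps :: "(nat \<times> nat) set \<Rightarrow> bool"
  assumes "n \<ge> 2" and "even n" and "r \<ge> 1"
    and "is_graph ({1..n} \<union> {n+1..n+r}) GR"
    and "perfect_matching GR {1..n} M0"
    and "rcrsf GR {1..n} {n+1..n+r} F"
    and "compatible n M0 F"
  shows "perfect_matching GR {1..n} (M_eps M0 F eps)"
proof -
  have sv: "single_valued F"
    using assms(6) by (rule rcrsf_single_valued)
  have alternating: "\<forall>a b c. (a, b) \<in> C \<and> (b, c) \<in> C \<longrightarrow> (und (a, b) \<in> M0 \<longleftrightarrow> und (b, c) \<notin> M0)"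
    if "C \<in> cycles F" for C
    using assms(7) that unfolding compatible_def by blast
  show ?thesis
    unfolding M_eps_eq_switch_cycles
  proof (rule perfect_matching_switch_cycles[OF assms(5)])
    show "und ` C \<subseteq> {e \<in> GR. e \<subseteq> {1..n}}" if "C \<in> cycles F" for C
      using assms(6) that by (rule rcrsf_cycle_edges)
    show "C = C'" if "C \<in> cycles F" "C' \<in> cycles F"
      and "x \<in> \<Union>(und ` C)" "x \<in> \<Union>(und ` C')" for C C' x
      using cycle_of_vertex_in_cycles(2)[OF sv that(1,3)]
        cycle_of_vertex_in_cycles(2)[OF sv that(2,4)] by simp
    show "(\<exists>e \<in> und ` C \<inter> M0. x \<in> e) \<and> (\<exists>!e. e \<in> und ` C - M0 \<and> x \<in> e)"
      if "C \<in> cycles F" "x \<in> \<Union>(und ` C)" for C x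
      using sv that alternating[OF that(1)] by (rule alternating_cycle_at_vertex)
  qed
qed

end
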